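(* Let $P\in\mathfrak N_2$ and let $r:P\to R$ be a retraction onto a retract $R$ of width three which is a tower of nice sections. Suppose $\ell\in[0,h_R-1]$ satisfies $R(\ell)<R(\ell+1)$, and suppose there is $k\in[0,h_P-1]$ such that either (a) $R(\ell)=P(k)$, or (b) $R(\ell)\subsetneq P(k)$, $P(k)\cup P(k+1)$ is of type $3C$, and $r[P(k+1)]\subseteq R(\ell+1\to h_R)$. Then $k\le h_P-3$, $P(k+1)\cup P(k+2)$ is of type $3C$, and $r[P(k+1)]=R(\ell+1)\subseteq P(k+2)$.
   Context: All posets are finite; $h_P$ is the height; level sets $P(0)=\min P$, $P(k+1)=\min(P\setminus\bigcup_{i\le k}P(i))$; $P(k\to\ell)=\bigcup_{i=k}^\ell P(i)$; level sets of $R$ refer to $R$'s own levels. $A<B$ means $a<b$ for all $a\in A,b\in B$. A retraction $r:P\to R$ is an idempotent order-preserving self-map with image $R$. Type $3C$: three disjoint 2-element chains, no further comparabilities. A section is either a 2-element antichain or a poset $P$ of height $h_P\ge1$ with carrier $\{c_{k,j}:k\in[0,h_P],j\in\{0,1,2\}\}$ such that: $c_{0,j}<\dots<c_{h_P,j}$ for each $j$; each $\{c_{k,0},c_{k,1},c_{k,2}\}$ is an antichain; $c_{k,i}<c_{\ell,j}\Rightarrow c_{k,i+1}<c_{\ell,j+1}$ (indices mod 3); and for no $k$ is $P(k)<P(k+1)$ with both 3-element. A section is nice if for all $x<y$: $\{z:z>x\}\not\subseteq\{z:z\ge y\}$ and $\{z:z<y\}\not\subseteq\{z:z\le x\}$.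 A tower of nice sections is an ordinal sum of nice sections. $\mathfrak N_2$ is the class of nice sections of width three of height $\ge2$ with horizon 2, i.e. $P(k)<P(\ell)$ whenever $\ell\ge k+2$; consecutive level pairs are 6-crowns or of type $3C$. *)

theory Defs
  imports Main
begin

(* Finite posets are represented as finite carrier sets P :: 'a set of a type
   'a :: order, carrying the induced order.  Subposets (e.g. the retract R)
   carry the induced order as well. *)

definition mins :: "'a::order set \<Rightarrow> 'a set" where
  "mins S = {x \<in> S. \<not> (\<exists>y\<in>S. y < x)}"

fun rest :: "'a::order set \<Rightarrow> nat \<Rightarrow> 'a set" where
  "rest S 0 = S"
| "rest S (Suc k) = rest S k - mins (rest S k)"

definition level :: "'a::order set \<Rightarrow> nat \<Rightarrow> 'a set" where
  "level S k = mins (rest S k)"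

definition levels_between :: "'a::order set \<Rightarrow> nat \<Rightarrow> nat \<Rightarrow> 'a set" where
  "levels_between S k l = (\<Union>i\<in>{k..l}. level S i)"

definition set_less :: "'a::order set \<Rightarrow> 'a set \<Rightarrow> bool" where
  "set_less A B \<longleftrightarrow> (\<forall>a\<in>A. \<forall>b\<in>B. a < b)"

definition is_chain :: "'a::order set \<Rightarrow> bool" where
  "is_chain C \<longleftrightarrow> (\<forall>x\<in>C. \<forall>y\<in>C. x \<le> y \<or> y \<le> x)"

definition is_antichain :: "'a::order set \<Rightarrow> bool" where
  "is_antichain A \<longleftrightarrow> (\<forall>x\<in>A. \<forall>y\<in>A. x \<le> y \<longrightarrow> x = y)"

definition height :: "'a::order set \<Rightarrow> nat" where
  "height S = Max ((\<lambda>C. card C - 1) ` {C. C \<subseteq> S \<and> is_chain C})"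

definition width :: "'a::order set \<Rightarrow> nat" where
  "width S = Max (card ` {A. A \<subseteq> S \<and> is_antichain A})"

definition type_3C :: "'a::order set \<Rightarrow> bool" where
  "type_3C S \<longleftrightarrow> (\<exists>a0 a1 a2 b0 b1 b2. S = {a0, a1, a2, b0, b1, b2} \<and> card S = 6 \<and>
     (\<forall>x\<in>S. \<forall>y\<in>S. x < y \<longleftrightarrow>
        ((x = a0 \<and> y = b0) \<or> (x = a1 \<and> y = b1) \<or> (x = a2 \<and> y = b2))))"

definition is_section :: "'a::order set \<Rightarrow> bool" where
  "is_section S \<longleftrightarrow>
    (card S = 2 \<and> is_antichain S) \<or>
    (height S \<ge> 1 \<and>
     (\<exists>c :: nat \<Rightarrow> nat \<Rightarrow> 'a.
        inj_on (\<lambda>(k, j). c k j) ({0..height S} \<times> {0..<3}) \<and>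
        S = (\<lambda>(k, j). c k j) ` ({0..height S} \<times> {0..<3}) \<and>
        (\<forall>j<3. \<forall>k<height S. c k j < c (Suc k) j) \<and>
        (\<forall>k\<le>height S. is_antichain {c k 0, c k 1, c k 2}) \<and>
        (\<forall>k\<le>height S. \<forall>l\<le>height S. \<forall>i<3. \<forall>j<3.
            c k i < c l j \<longrightarrow> c k ((i + 1) mod 3) < c l ((j + 1) mod 3))) \<and>
     \<not> (\<exists>k. set_less (level S k) (level S (Suc k)) \<and>
            card (level S k) = 3 \<and> card (level S (Suc k)) = 3))"

definition is_nice :: "'a::order set \<Rightarrow> bool" where
  "is_nice S \<longleftrightarrow> (\<forall>x\<in>S. \<forall>y\<in>S. x < y \<longrightarrow>
      \<not> ({z\<in>S. x < z} \<subseteq> {z\<in>S. y \<le> z}) \<and> \<not> ({z\<in>S. z < y} \<subseteq> {z\<in>S. z \<le> x}))"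

definition tower_of_nice_sections :: "'a::order set \<Rightarrow> bool" where
  "tower_of_nice_sections S \<longleftrightarrow> (\<exists>Qs. Qs \<noteq> [] \<and> S = \<Union>(set Qs) \<and>
      (\<forall>i<length Qs. is_section (Qs ! i) \<and> is_nice (Qs ! i)) \<and>
      (\<forall>i j. i < j \<and> j < length Qs \<longrightarrow> set_less (Qs ! i) (Qs ! j)))"

definition in_N2 :: "'a::order set \<Rightarrow> bool" where
  "in_N2 P \<longleftrightarrow> finite P \<and> is_section P \<and> is_nice P \<and> width P = 3 \<and> height P \<ge> 2 \<and>
      (\<forall>k l. k + 2 \<le> l \<longrightarrow> set_less (level P k) (level P l))"

definition retraction :: "'a::order set \<Rightarrow> ('a \<Rightarrow> 'a) \<Rightarrow> 'a set \<Rightarrow> bool" where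
  "retraction P r R \<longleftrightarrow> (\<forall>x\<in>P. r x \<in> P) \<and> (\<forall>x\<in>P. \<forall>y\<in>P. x \<le> y \<longrightarrow> r x \<le> r y) \<and>
      (\<forall>x\<in>P. r (r x) = r x) \<and> r ` P = R"

end

theory Submission
  imports Defs
begin

text \<open>
  Let \<open>A = P(k)\<close>, \<open>B = P(k+1)\<close>, \<open>L = R(l)\<close>, \<open>L' = R(l+1)\<close>. First, \<open>r\<close> maps \<open>B\<close> to
  levels of \<open>R\<close> above \<open>l\<close>: in case (b) by hypothesis; in case (a) an element \<open>x \<in> B\<close> with
  \<open>r x = a \<in> A = L\<close> is impossible, because \<open>L < L'\<close> forces \<open>L\<close> to be the top level of a section
  of the tower \<open>R\<close>, which provides \<open>u \<in> R(l-1)\<close> with \<open>\<not> u \<le> a\<close>, while horizon 2 gives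
  \<open>u < x\<close> and hence \<open>u = r u \<le> r x = a\<close>. Consequently, if \<open>x \<in> B\<close> lies below \<open>y \<in> L'\<close>, then
  \<open>r x\<close> is squeezed between an element of the antichain \<open>L'\<close> and \<open>y\<close>, so \<open>r x = y\<close>.

  No element of \<open>B\<close> lies above all of \<open>L\<close> (in case (a) since \<open>A \<union> B\<close> is not complete, in case
  (b) since in type 3C each element has one lower cover while \<open>|L| \<ge> 2\<close>), so \<open>L'\<close> lies at
  \<open>P\<close>-levels \<open>\<ge> k+2\<close>. An element of \<open>L'\<close> at a level \<open>\<ge> k+3\<close> would be above all of \<open>B\<close>,
  making \<open>r\<close> constant on \<open>B\<close> although it hits two elements of \<open>L'\<close>; thus \<open>L' \<subseteq> P(k+2)\<close>.
  Two elements of \<open>L'\<close> have no common lower bound in \<open>B\<close>, so \<open>B \<union> P(k+2)\<close> is of type 3C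
  rather than a 6-crown, and niceness forbids such a pair at the top of \<open>P\<close>, so \<open>k+3 \<le> h\<^sub>P\<close>.
  Finally \<open>r[B] \<subseteq> L'\<close>, since an image above \<open>L'\<close> would lie below the whole antichain
  \<open>R(l+2)\<close>, which has at least two elements.
\<close>

section \<open>Levels of finite posets\<close>

lemma rest_subset: "rest S k \<subseteq> S"
  by (induction k) auto

lemma rest_antimono: "i \<le> j \<Longrightarrow> rest S j \<subseteq> rest S i"
  by (induction j) (auto simp: le_Suc_eq)

lemma level_subset_rest: "level S k \<subseteq> rest S k"
  by (auto simp: level_def mins_def)

lemma level_subset: "level S k \<subseteq> S"
  using level_subset_rest rest_subset by blast

lemma level_antichain: "x \<in> level S k \<Longrightarrow> y \<in> level S k \<Longrightarrow> \<not> x < y"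
  by (auto simp: level_def mins_def)

lemma level_antichain_le: "x \<in> level S k \<Longrightarrow> y \<in> level S k \<Longrightarrow> x \<le> y \<Longrightarrow> x = y"
  using level_antichain[of x S k y] by (auto simp: le_less)

lemma less_imp_level_less:
  assumes "x \<in> level S i" "y \<in> level S j" "x < y" shows "i < j"
proof (rule ccontr)
  assume "\<not> i < j"
  then have "x \<in> rest S j" using assms(1) level_subset_rest rest_antimono[of j i S] by auto
  then show False using assms(2,3) by (auto simp: level_def mins_def)
qed

lemma less_in_adjacent_levels:
  assumes "x \<in> level S m \<union> level S (Suc m)" "y \<in> level S m \<union> level S (Suc m)" "x < y"
  shows "x \<in> level S m \<and> y \<in> level S (Suc m)"
  using assms level_antichain[of x S m y] level_antichain[of x S "Suc m" y]
    less_imp_level_less[of x S "Suc m" y m] by auto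

lemma level_disjoint:
  assumes "x \<in> level S i" "x \<in> level S j" shows "i = j"
proof -
  have "x \<notin> rest S (Suc m)" if "x \<in> level S m" for m
    using that by (simp add: level_def)
  moreover have "x \<in> rest S (Suc m)" if "x \<in> level S n" "m < n" for m n
    using that level_subset_rest rest_antimono[of "Suc m" n S] by auto
  ultimately show ?thesis using assms by (metis linorder_neq_iff)
qed

lemma mins_nonempty: "finite A \<Longrightarrow> A \<noteq> {} \<Longrightarrow> mins A \<noteq> {}"
  using finite_has_minimal[of A] by (auto simp: mins_def less_le)

lemma card_rest: "finite S \<Longrightarrow> rest S k \<noteq> {} \<Longrightarrow> card (rest S k) + k \<le> card S"
proof (induction k)
  case (Suc k)
  have fin: "finite (rest S k)" using Suc.prems(1) rest_subset finite_subset by blast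
  have ne: "rest S k \<noteq> {}" using Suc.prems(2) by auto
  have "mins (rest S k) \<subseteq> rest S k" "mins (rest S k) \<noteq> {}"
    using mins_nonempty[OF fin ne] by (auto simp: mins_def)
  then have "card (rest S (Suc k)) < card (rest S k)"
    using fin by (intro psubset_card_mono) auto
  then show ?case using Suc.IH[OF Suc.prems(1) ne] by simp
qed simp

lemma ex_level: assumes "finite S" "x \<in> S" shows "\<exists>k. x \<in> level S k"
proof -
  have "\<exists>k. x \<in> rest S k \<and> x \<notin> rest S (Suc k)" if "x \<in> rest S 0" "x \<notin> rest S n" for n
    using that by (induction n) auto
  moreover have "rest S (Suc (card S)) = {}"
    using card_rest[OF assms(1), of "Suc (card S)"] by linarith
  ultimately show ?thesis using assms(2) by (fastforce simp: level_def)
qed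

definition level_of :: "'a::order set \<Rightarrow> 'a \<Rightarrow> nat" where
  "level_of S x = (THE k. x \<in> level S k)"

lemma level_of_eq: "x \<in> level S k \<Longrightarrow> level_of S x = k"
  unfolding level_of_def by (blast intro: the_equality level_disjoint)

lemma level_of_mem: "finite S \<Longrightarrow> x \<in> S \<Longrightarrow> x \<in> level S (level_of S x)"
  using ex_level level_of_eq by fastforce

lemma mem_level_iff: "finite S \<Longrightarrow> x \<in> level S k \<longleftrightarrow> x \<in> S \<and> level_of S x = k"
  using level_of_mem[of S x] level_of_eq[of x S k] level_subset[of S k] by auto

lemma mem_levels_between_imp_level_of_ge:
  "x \<in> levels_between S i j \<Longrightarrow> i \<le> level_of S x"
  unfolding levels_between_def using level_of_eq by fastforce

lemma level_of_less: "finite S \<Longrightarrow> x \<in> S \<Longrightarrow> y \<in> S \<Longrightarrow> x < y \<Longrightarrow> level_of S x < level_of S y"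
  using level_of_mem[of S x] level_of_mem[of S y] less_imp_level_less by blast

lemma ex_less_in_prev_level:
  assumes "finite S" "x \<in> level S (Suc k)" shows "\<exists>y\<in>level S k. y < x"
proof -
  let ?A = "{y \<in> rest S k. y < x}"
  have "x \<in> rest S k" "x \<notin> mins (rest S k)"
    using assms(2) by (auto simp: level_def mins_def)
  then have "?A \<noteq> {}" unfolding mins_def by blast
  moreover have "finite ?A" using finite_subset[OF rest_subset assms(1)] by simp
  ultimately obtain m where m: "m \<in> ?A" "\<forall>b\<in>?A. b \<le> m \<longrightarrow> m = b"
    using finite_has_minimal by blast
  then have "m \<in> level S k" by (auto simp: level_def mins_def)
  then show ?thesis using m(1) by blast
qed

lemma ex_le_in_level:
  assumes "finite S" "x \<in> S" "j \<le> level_of S x" shows "\<exists>y\<in>level S j. y \<le> x"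
  using assms(3)
proof (induction "level_of S x - j" arbitrary: j)
  case 0
  then show ?case using level_of_mem[OF assms(1,2)] by (intro bexI[of _ x]) auto
next
  case (Suc n)
  then have "n = level_of S x - Suc j" "Suc j \<le> level_of S x" by auto
  then obtain z where z: "z \<in> level S (Suc j)" "z \<le> x" using Suc.hyps(1) by blast
  then obtain y where "y \<in> level S j" "y < z" using ex_less_in_prev_level assms(1) by blast
  moreover have "y \<le> x" using \<open>y < z\<close> z(2) by simp
  ultimately show ?case by blast
qed

lemma chain_below_level:
  assumes "finite S" "x \<in> level S j"
  shows "\<exists>C. C \<subseteq> S \<and> is_chain C \<and> card C = Suc j \<and> (\<forall>z\<in>C. z \<le> x)"
  using assms(2)
proof (induction j arbitrary: x)
  case 0
  then have "{x} \<subseteq> S" using level_subset by blast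
  then show ?case by (intro exI[of _ "{x}"]) (simp add: is_chain_def)
next
  case (Suc j)
  obtain y where y: "y \<in> level S j" "y < x" using ex_less_in_prev_level[OF assms(1) Suc.prems] by blast
  obtain C where C: "C \<subseteq> S" "is_chain C" "card C = Suc j" "\<forall>z\<in>C. z \<le> y"
    using Suc.IH[OF y(1)] by blast
  have le_x: "\<forall>z\<in>insert x C. z \<le> x" using C(4) less_imp_le[OF y(2)] order_trans by blast
  have "x \<notin> C" using C(4) y(2) by (auto dest: leD)
  moreover have "finite C" using C(1) assms(1) finite_subset by blast
  moreover have "is_chain (insert x C)" using C(2) le_x unfolding is_chain_def by blast
  moreover have "insert x C \<subseteq> S" using C(1) Suc.prems level_subset by blast
  ultimately have "card (insert x C) = Suc (Suc j)" using C(3) by simp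
  then show ?case using le_x \<open>is_chain (insert x C)\<close> \<open>insert x C \<subseteq> S\<close> by blast
qed

lemma finite_chains: "finite S \<Longrightarrow> finite {C. C \<subseteq> S \<and> is_chain C}"
  by (rule finite_subset[of _ "Pow S"]) auto

lemma height_empty: "height {} = 0"
  unfolding height_def is_chain_def by simp

lemma level_nonempty_imp_le_height:
  assumes "finite S" "level S j \<noteq> {}" shows "j \<le> height S"
proof -
  obtain x where "x \<in> level S j" using assms(2) by blast
  from chain_below_level[OF assms(1) this]
  obtain C where C: "C \<subseteq> S" "is_chain C" "card C = Suc j" by blast
  have "card C - 1 \<in> (\<lambda>C. card C - 1) ` {C. C \<subseteq> S \<and> is_chain C}" using C(1,2) by blast
  then have "card C - 1 \<le> height S"
    unfolding height_def using finite_chains[OF assms(1)] by simp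
  then show ?thesis using C(3) by simp
qed

lemma level_of_le_height: "finite S \<Longrightarrow> x \<in> S \<Longrightarrow> level_of S x \<le> height S"
  using level_nonempty_imp_le_height[of S "level_of S x"] level_of_mem[of S x] by blast

lemma chain_reaches_level:
  assumes "finite S" "C \<subseteq> S" "is_chain C" "C \<noteq> {}"
  shows "\<exists>z\<in>C. card C - 1 \<le> level_of S z"
proof (rule ccontr)
  assume "\<not> ?thesis"
  then have sub: "level_of S ` C \<subseteq> {..< card C - 1}" by force
  have "inj_on (level_of S) C"
  proof (rule inj_onI, rule ccontr)
    fix z w assume zw: "z \<in> C" "w \<in> C" "level_of S z = level_of S w" "z \<noteq> w"
    then have "z < w \<or> w < z" using assms(3) unfolding is_chain_def by (auto simp: less_le)
    then show False using level_of_less[OF assms(1)] zw assms(2) by (metis less_irrefl subsetD)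
  qed
  then have "card C \<le> card C - 1" using card_mono[OF _ sub] by (simp add: card_image)
  moreover have "card C > 0" using assms finite_subset by (auto simp: card_gt_0_iff)
  ultimately show False by linarith
qed

lemma level_nonempty_downward:
  assumes "finite S" "level S j' \<noteq> {}" "j \<le> j'" shows "level S j \<noteq> {}"
  using assms ex_le_in_level[OF assms(1)] mem_level_iff[OF assms(1)] by fastforce

lemma level_nonempty_iff:
  assumes "finite S" "S \<noteq> {}" shows "level S j \<noteq> {} \<longleftrightarrow> j \<le> height S"
proof
  assume j: "j \<le> height S"
  have "{} \<in> {C. C \<subseteq> S \<and> is_chain C}" by (simp add: is_chain_def)
  then have "height S \<in> (\<lambda>C. card C - 1) ` {C. C \<subseteq> S \<and> is_chain C}"
    unfolding height_def using finite_chains[OF assms(1)] by (intro Max_in) auto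
  then obtain C where C: "C \<subseteq> S" "is_chain C" "height S = card C - 1" by blast
  obtain z where "z \<in> S" "height S \<le> level_of S z"
  proof (cases "C = {}")
    case True
    then show ?thesis using that assms(2) C(3) by auto
  next
    case False
    then show ?thesis using that chain_reaches_level[OF assms(1) C(1,2)] C by auto
  qed
  then have "level S (level_of S z) \<noteq> {}" "j \<le> level_of S z"
    using level_of_mem[OF assms(1)] j by auto
  then show "level S j \<noteq> {}" by (rule level_nonempty_downward[OF assms(1)])
qed (rule level_nonempty_imp_le_height[OF assms(1)])

lemma level_of_unique:
  fixes f :: "'a::order \<Rightarrow> nat"
  assumes fin: "finite S"
    and mono: "\<And>x y. x \<in> S \<Longrightarrow> y \<in> S \<Longrightarrow> x < y \<Longrightarrow> f x < f y"
    and down: "\<And>x j. x \<in> S \<Longrightarrow> f x = Suc j \<Longrightarrow> \<exists>y\<in>S. y < x \<and> f y = j"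
  shows "x \<in> S \<Longrightarrow> level_of S x = f x"
proof (induction "f x" arbitrary: x rule: less_induct)
  case less
  show ?case
  proof (rule antisym)
    show "level_of S x \<le> f x"
    proof (cases "level_of S x")
      case (Suc j)
      then obtain y where y: "y \<in> level S j" "y < x"
        using level_of_mem[OF fin less.prems] ex_less_in_prev_level[OF fin] by force
      then have "y \<in> S" "f y < f x" using level_subset mono less.prems by blast+
      then show ?thesis using less.hyps level_of_eq[OF y(1)] Suc by fastforce
    qed simp
  next
    show "f x \<le> level_of S x"
    proof (cases "f x")
      case (Suc j)
      then obtain y where y: "y \<in> S" "y < x" "f y = j" using down[OF less.prems] by blast
      then show ?thesis using less.hyps Suc level_of_less[OF fin y(1) less.prems y(2)] by fastforce
    qed simp
  qed
qed

section \<open>Sections\<close>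

lemma type_3C_unique_lower:
  assumes "type_3C S" "x \<in> S" "y \<in> S" "z \<in> S" "x < z" "y < z"
  shows "x = y"
proof -
  obtain a0 a1 a2 b0 b1 b2 where S: "S = {a0, a1, a2, b0, b1, b2}" "card S = 6"
    and less: "\<forall>x\<in>S. \<forall>y\<in>S. x < y \<longleftrightarrow> (x = a0 \<and> y = b0) \<or> (x = a1 \<and> y = b1) \<or> (x = a2 \<and> y = b2)"
    using assms(1) unfolding type_3C_def by (elim exE conjE)
  have "card (set [a0, a1, a2, b0, b1, b2]) = length [a0, a1, a2, b0, b1, b2]" using S by simp
  then have "distinct [a0, a1, a2, b0, b1, b2]" by (rule card_distinct)
  moreover have "(x = a0 \<and> z = b0) \<or> (x = a1 \<and> z = b1) \<or> (x = a2 \<and> z = b2)"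
    using less[rule_format, OF assms(2,4)] assms(5) by blast
  moreover have "(y = a0 \<and> z = b0) \<or> (y = a1 \<and> z = b1) \<or> (y = a2 \<and> z = b2)"
    using less[rule_format, OF assms(3,4)] assms(6) by blast
  ultimately show ?thesis by (elim disjE conjE) auto
qed

lemma type_3C_intro:
  fixes a0 a1 a2 b0 b1 b2 :: "'a::order"
  assumes "distinct [a0, a1, a2, b0, b1, b2]"
    and "\<forall>x\<in>{a0, a1, a2, b0, b1, b2}. \<forall>y\<in>{a0, a1, a2, b0, b1, b2}.
           x < y \<longleftrightarrow> (x = a0 \<and> y = b0) \<or> (x = a1 \<and> y = b1) \<or> (x = a2 \<and> y = b2)"
  shows "type_3C {a0, a1, a2, b0, b1, b2}"
  unfolding type_3C_def
proof (rule exI[of _ a0], rule exI[of _ a1], rule exI[of _ a2],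
    rule exI[of _ b0], rule exI[of _ b1], rule exI[of _ b2], intro conjI)
  show "card {a0, a1, a2, b0, b1, b2} = 6" using distinct_card[OF assms(1)] by simp
qed (rule refl assms(2))+

lemma less_3_iff: "(i::nat) < 3 \<longleftrightarrow> i = 0 \<or> i = 1 \<or> i = 2"
  by arith

lemma less_3_cases: "(\<forall>i<(3::nat). P i) \<longleftrightarrow> P 0 \<and> P 1 \<and> P 2" "(\<exists>i<(3::nat). P i) \<longleftrightarrow> P 0 \<or> P 1 \<or> P 2"
  unfolding less_3_iff by auto

text \<open>A reflexive relation on \<open>{0,1,2}\<close> invariant under the rotation \<open>i \<mapsto> i + 1 mod 3\<close> depends
  only on \<open>j - i mod 3\<close>; unless it is total, it is either the identity or a crown.\<close>
lemma rotation_invariant_relation_3: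
  assumes "p 0 0" "p 1 1" "p 2 2" "p 0 1 \<Longrightarrow> p 1 2" "p 1 2 \<Longrightarrow> p 2 0" "p 2 0 \<Longrightarrow> p 0 1"
    "p 0 2 \<Longrightarrow> p 1 0" "p 1 0 \<Longrightarrow> p 2 1" "p 2 1 \<Longrightarrow> p 0 2"
    "\<not> (\<forall>i<(3::nat). \<forall>j<(3::nat). p i j)"
  shows "\<forall>j<(3::nat). \<exists>i<(3::nat). \<not> p i j"
    and "(\<forall>i<(3::nat). \<forall>j<(3::nat). p i j \<longleftrightarrow> i = j) \<or>
         (\<forall>j1<(3::nat). \<forall>j2<(3::nat). j1 \<noteq> j2 \<longrightarrow> (\<exists>i<(3::nat). p i j1 \<and> p i j2))"
  using assms unfolding less_3_cases by auto

lemma antichain_height_0: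
  assumes "finite S" "S \<noteq> {}" "is_antichain S" shows "height S = 0"
proof (rule ccontr)
  assume "height S \<noteq> 0"
  then have "level S (Suc 0) \<noteq> {}" using level_nonempty_iff[OF assms(1,2)] by simp
  then obtain x where x: "x \<in> level S (Suc 0)" by blast
  then obtain y where y: "y \<in> level S 0" "y < x" using ex_less_in_prev_level[OF assms(1)] by blast
  have "x \<in> S" "y \<in> S" using x y(1) level_subset by blast+
  then show False using y(2) assms(3) unfolding is_antichain_def by (auto simp: less_le)
qed

lemma level_eq_row:
  fixes c :: "nat \<Rightarrow> nat \<Rightarrow> 'a::order"
  assumes fin: "finite S" and S: "S = (\<lambda>(k, j). c k j) ` ({0..height S} \<times> {0..<3})"
    and column: "\<forall>j<3. \<forall>k<height S. c k j < c (Suc k) j"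
    and m: "m \<le> height S"
  shows "level S m = {c m 0, c m 1, c m 2}"
proof -
  have in_S: "c n j \<in> S" if "n \<le> height S" "j < 3" for n j
    using that S by force
  have climb: "level_of S (c n j) + (n' - n) \<le> level_of S (c n' j)"
    if "n \<le> n'" "n' \<le> height S" "j < 3" for n n' j
    using that
  proof (induction n')
    case (Suc n')
    show ?case
    proof (cases "n = Suc n'")
      case False
      then have "level_of S (c n j) + (n' - n) \<le> level_of S (c n' j)" using Suc by simp
      moreover have "level_of S (c n' j) < level_of S (c (Suc n') j)"
        using level_of_less[OF fin in_S in_S] column Suc.prems by simp
      ultimately show ?thesis using False Suc.prems by simp
    qed simp
  qed simp
  have row: "level_of S (c n j) = n" if "n \<le> height S" "j < 3" for n j
    using climb[of 0 n j] climb[of n "height S" j] that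
      level_of_le_height[OF fin in_S[of "height S" j]] by simp
  show ?thesis
  proof (intro set_eqI iffI)
    fix x assume x: "x \<in> level S m"
    then have "x \<in> S" using level_subset by blast
    then have "x \<in> (\<lambda>(k, j). c k j) ` ({0..height S} \<times> {0..<3})" using S by simp
    then obtain n j where nj: "n \<le> height S" "j < 3" "x = c n j" by auto
    moreover have "level_of S x = m" using level_of_eq[OF x] .
    ultimately show "x \<in> {c m 0, c m 1, c m 2}"
      using row[OF nj(1,2)] nj(2,3) unfolding less_3_iff by auto
  next
    fix x assume "x \<in> {c m 0, c m 1, c m 2}"
    then show "x \<in> level S m" using row m in_S mem_level_iff[OF fin] by auto
  qed
qed

locale section_grid =
  fixes S :: "'a::order set" and c :: "nat \<Rightarrow> nat \<Rightarrow> 'a"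
  assumes finite_S: "finite S"
    and grid_inj: "inj_on (\<lambda>(k, j). c k j) ({0..height S} \<times> {0..<3})"
    and column_chain: "\<forall>j<3. \<forall>k<height S. c k j < c (Suc k) j"
    and rotation: "\<forall>k\<le>height S. \<forall>l\<le>height S. \<forall>i<3. \<forall>j<3.
      c k i < c l j \<longrightarrow> c k ((i + 1) mod 3) < c l ((j + 1) mod 3)"
    and no_complete_step: "\<not> (\<exists>k. set_less (level S k) (level S (Suc k)) \<and>
      card (level S k) = 3 \<and> card (level S (Suc k)) = 3)"
    and level_row: "\<forall>m\<le>height S. level S m = {c m 0, c m 1, c m 2}"
begin

lemma grid_distinct:
  assumes "n \<le> height S" "n' \<le> height S" "i < 3" "j < 3" "(n, i) \<noteq> (n', j)"
  shows "c n i \<noteq> c n' j"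
  using inj_onD[OF grid_inj, of "(n, i)" "(n', j)"] assms by auto

lemma card_level: "m \<le> height S \<Longrightarrow> card (level S m) = 3"
  using level_row grid_distinct[of m m 0 1] grid_distinct[of m m 0 2] grid_distinct[of m m 1 2]
  by simp

text \<open>Rows \<open>m\<close> and \<open>m + 1\<close> form a pair of type 3C exactly when they are parallel;
  otherwise the rotation symmetry makes them a 6-crown.\<close>

definition parallel :: "nat \<Rightarrow> bool" where
  "parallel m \<longleftrightarrow> (\<forall>i<3. \<forall>j<3. c m i < c (Suc m) j \<longleftrightarrow> i = j)"

lemma step_shape:
  assumes m: "m < height S"
  shows "\<forall>j<3. \<exists>i<3. \<not> c m i < c (Suc m) j"
    and "parallel m \<or> (\<forall>j1<3. \<forall>j2<3. j1 \<noteq> j2 \<longrightarrow> (\<exists>i<3. c m i < c (Suc m) j1 \<and> c m i < c (Suc m) j2))"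
proof -
  define p where "p i j \<longleftrightarrow> c m i < c (Suc m) j" for i j
  have rot: "p ((i + 1) mod 3) ((j + 1) mod 3)" if "p i j" "i < 3" "j < 3" for i j
    using rotation m that unfolding p_def by (metis Suc_leI less_imp_le)
  have "\<not> (\<forall>i<3. \<forall>j<3. p i j)"
  proof
    assume "\<forall>i<3. \<forall>j<3. p i j"
    then have "set_less (level S m) (level S (Suc m))"
      using level_row m unfolding set_less_def p_def less_3_cases by simp
    then show False using no_complete_step card_level m by (meson Suc_leI less_imp_le)
  qed
  moreover have "p 0 0" "p 1 1" "p 2 2" using column_chain m unfolding p_def by auto
  moreover have "p 0 1 \<Longrightarrow> p 1 2" "p 1 2 \<Longrightarrow> p 2 0" "p 2 0 \<Longrightarrow> p 0 1"
    "p 0 2 \<Longrightarrow> p 1 0" "p 1 0 \<Longrightarrow> p 2 1" "p 2 1 \<Longrightarrow> p 0 2"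
  proof -
    have e: "(0 + 1) mod 3 = (1::nat)" "(1 + 1) mod 3 = (2::nat)" "(2 + 1) mod 3 = (0::nat)"
      by simp_all
    show "p 0 1 \<Longrightarrow> p 1 2" using rot[of 0 1] unfolding e by simp
    show "p 1 2 \<Longrightarrow> p 2 0" using rot[of 1 2] unfolding e by simp
    show "p 2 0 \<Longrightarrow> p 0 1" using rot[of 2 0] unfolding e by simp
    show "p 0 2 \<Longrightarrow> p 1 0" using rot[of 0 2] unfolding e by simp
    show "p 1 0 \<Longrightarrow> p 2 1" using rot[of 1 0] unfolding e by simp
    show "p 2 1 \<Longrightarrow> p 0 2" using rot[of 2 1] unfolding e by simp
  qed
  ultimately show "\<forall>j<3. \<exists>i<3. \<not> c m i < c (Suc m) j"
    and "parallel m \<or> (\<forall>j1<3. \<forall>j2<3. j1 \<noteq> j2 \<longrightarrow> (\<exists>i<3. c m i < c (Suc m) j1 \<and> c m i < c (Suc m) j2))"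
    using rotation_invariant_relation_3[of p] unfolding parallel_def p_def by blast+
qed

lemma grid_mem_level: "m \<le> height S \<Longrightarrow> j < 3 \<Longrightarrow> c m j \<in> level S m"
  using level_row unfolding less_3_iff by auto

lemma mem_level_row:
  assumes "m \<le> height S" "x \<in> level S m" obtains j where "j < 3" "x = c m j"
proof -
  have "x \<in> {c m 0, c m 1, c m 2}" using level_row assms by blast
  then show thesis using that[of 0] that[of 1] that[of 2] by auto
qed

lemma ex_not_below:
  assumes "m < height S" "y \<in> level S (Suc m)" shows "\<exists>x\<in>level S m. \<not> x < y"
proof -
  obtain j where "j < 3" "y = c (Suc m) j" using mem_level_row[of "Suc m" y] assms by auto
  then obtain i where "i < 3" "\<not> c m i < y" using step_shape(1)[OF assms(1)] by blast
  then show ?thesis using grid_mem_level[of m i] assms(1) by auto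
qed

lemma crown_unless_parallel:
  assumes "m < height S" "\<not> parallel m" "y1 \<in> level S (Suc m)" "y2 \<in> level S (Suc m)" "y1 \<noteq> y2"
  shows "\<exists>x\<in>level S m. x < y1 \<and> x < y2"
proof -
  obtain j1 where "j1 < 3" "y1 = c (Suc m) j1" using mem_level_row[of "Suc m" y1] assms by auto
  moreover obtain j2 where "j2 < 3" "y2 = c (Suc m) j2" using mem_level_row[of "Suc m" y2] assms by auto
  ultimately obtain i where "i < 3" "c m i < y1" "c m i < y2"
    using step_shape(2)[OF assms(1)] assms(2,5) by blast
  then show ?thesis using grid_mem_level[of m i] assms(1) by auto
qed

lemma type_3C_imp_parallel:
  assumes m: "m < height S" and t: "type_3C (level S m \<union> level S (Suc m))"
  shows "parallel m"
  unfolding parallel_def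
proof (intro allI impI iffI)
  fix i j :: nat assume ij: "i < 3" "j < 3" "c m i < c (Suc m) j"
  have "c m i \<in> level S m" "c m j \<in> level S m" "c (Suc m) j \<in> level S (Suc m)"
    using grid_mem_level ij m by auto
  moreover have "c m j < c (Suc m) j" using column_chain ij m by blast
  ultimately have "c m i = c m j"
    using type_3C_unique_lower[OF t _ _ _ ij(3)] by blast
  then show "i = j" using grid_distinct[of m m i j] ij m by auto
next
  fix i j :: nat assume "i < 3" "j < 3" "i = j"
  then show "c m i < c (Suc m) j" using column_chain m by blast
qed

lemma parallel_imp_type_3C:
  assumes m: "m < height S" and par: "parallel m"
  shows "type_3C (level S m \<union> level S (Suc m))"
proof -
  have rows: "level S m = {c m 0, c m 1, c m 2}" "level S (Suc m) = {c (Suc m) 0, c (Suc m) 1, c (Suc m) 2}"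
    using level_row m by auto
  then have U: "level S m \<union> level S (Suc m) = {c m 0, c m 1, c m 2, c (Suc m) 0, c (Suc m) 1, c (Suc m) 2}"
    by auto
  show "type_3C (level S m \<union> level S (Suc m))"
    unfolding U
  proof (rule type_3C_intro)
    show "distinct [c m 0, c m 1, c m 2, c (Suc m) 0, c (Suc m) 1, c (Suc m) 2]"
      using grid_distinct m by simp
  next
    have "x < y \<longleftrightarrow> (x = c m 0 \<and> y = c (Suc m) 0) \<or> (x = c m 1 \<and> y = c (Suc m) 1) \<or> (x = c m 2 \<and> y = c (Suc m) 2)"
      if "x \<in> level S m \<union> level S (Suc m)" "y \<in> level S m \<union> level S (Suc m)" for x y
    proof
      assume xy: "x < y"
      then have "x \<in> level S m" "y \<in> level S (Suc m)"
        using less_in_adjacent_levels that by blast+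
      then obtain i j where ij: "i < 3" "x = c m i" "j < 3" "y = c (Suc m) j"
        using mem_level_row m by (metis Suc_leI less_imp_le)
      moreover have "i = j" using par[unfolded parallel_def, rule_format, OF ij(1,3)] xy ij by simp
      ultimately show "(x = c m 0 \<and> y = c (Suc m) 0) \<or> (x = c m 1 \<and> y = c (Suc m) 1) \<or> (x = c m 2 \<and> y = c (Suc m) 2)"
        unfolding less_3_iff by auto
    next
      assume "(x = c m 0 \<and> y = c (Suc m) 0) \<or> (x = c m 1 \<and> y = c (Suc m) 1) \<or> (x = c m 2 \<and> y = c (Suc m) 2)"
      then show "x < y" using par unfolding parallel_def less_3_cases by auto
    qed
    then show "\<forall>x\<in>{c m 0, c m 1, c m 2, c (Suc m) 0, c (Suc m) 1, c (Suc m) 2}.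
      \<forall>y\<in>{c m 0, c m 1, c m 2, c (Suc m) 0, c (Suc m) 1, c (Suc m) 2}.
        x < y \<longleftrightarrow> (x = c m 0 \<and> y = c (Suc m) 0) \<or> (x = c m 1 \<and> y = c (Suc m) 1) \<or> (x = c m 2 \<and> y = c (Suc m) 2)"
      unfolding U[symmetric] by blast
  qed
qed

lemma top_not_parallel:
  assumes nice: "is_nice S" and h: "0 < height S"
  shows "\<not> parallel (height S - 1)"
proof
  assume "parallel (height S - 1)"
  define m where "m = height S - 1"
  have top: "Suc m = height S" using h unfolding m_def by simp
  have par: "c m i < c (Suc m) j \<longleftrightarrow> i = j" if "i < 3" "j < 3" for i j
    using \<open>parallel (height S - 1)\<close> that unfolding parallel_def m_def by blast
  define x y where "x = c m 0" and "y = c (Suc m) 0"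
  have x: "x \<in> level S m" and y: "y \<in> level S (Suc m)"
    using grid_mem_level top unfolding x_def y_def by auto
  have "x < y" using par unfolding x_def y_def by simp
  moreover have "z = y" if z: "z \<in> S" "x < z" for z
  proof -
    have "m < level_of S z"
      using less_imp_level_less[OF x level_of_mem[OF finite_S z(1)] z(2)] .
    then have "level_of S z = Suc m" using level_of_le_height[OF finite_S z(1)] top by simp
    then have "z \<in> level S (Suc m)" using level_of_mem[OF finite_S z(1)] by simp
    then obtain j where "j < 3" "z = c (Suc m) j" using mem_level_row top by auto
    then show "z = y" using par[of 0 j] z(2) unfolding x_def y_def by simp
  qed
  ultimately show False
    using nice x y level_subset unfolding is_nice_def by blast
qed

end

lemma section_grid_exists:
  assumes fin: "finite S" and sec: "is_section S" and h: "0 < height S"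
  obtains c where "section_grid S c"
proof -
  have "\<not> (card S = 2 \<and> is_antichain S)"
    using antichain_height_0[OF fin] h by fastforce
  then obtain c :: "nat \<Rightarrow> nat \<Rightarrow> 'a" where
    inj: "inj_on (\<lambda>(k, j). c k j) ({0..height S} \<times> {0..<3})"
    and S: "S = (\<lambda>(k, j). c k j) ` ({0..height S} \<times> {0..<3})"
    and column: "\<forall>j<3. \<forall>k<height S. c k j < c (Suc k) j"
    and rotation: "\<forall>k\<le>height S. \<forall>l\<le>height S. \<forall>i<3. \<forall>j<3.
      c k i < c l j \<longrightarrow> c k ((i + 1) mod 3) < c l ((j + 1) mod 3)"
    and steps: "\<not> (\<exists>k. set_less (level S k) (level S (Suc k)) \<and>
      card (level S k) = 3 \<and> card (level S (Suc k)) = 3)"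
    using sec unfolding is_section_def by blast
  moreover have "\<forall>m\<le>height S. level S m = {c m 0, c m 1, c m 2}"
    using level_eq_row[OF fin S column] by blast
  ultimately show thesis by (intro that section_grid.intro[OF fin])
qed

lemma section_card_level:
  assumes "finite S" "is_section S" "0 < height S" "m \<le> height S"
  shows "card (level S m) = 3"
proof -
  obtain c where "section_grid S c" using section_grid_exists[OF assms(1-3)] by blast
  then show ?thesis using section_grid.card_level assms(4) by blast
qed

lemma section_ex_not_below:
  assumes "finite S" "is_section S" "m < height S" "y \<in> level S (Suc m)"
  shows "\<exists>x\<in>level S m. \<not> x < y"
proof -
  obtain c where "section_grid S c" using section_grid_exists[OF assms(1,2)] assms(3) by force
  then show ?thesis using section_grid.ex_not_below assms(3,4) by blast
qed

lemma section_type_3C_or_crown: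
  assumes "finite S" "is_section S" "m < height S"
  shows "type_3C (level S m \<union> level S (Suc m)) \<or>
    (\<forall>y1\<in>level S (Suc m). \<forall>y2\<in>level S (Suc m). y1 \<noteq> y2 \<longrightarrow> (\<exists>x\<in>level S m. x < y1 \<and> x < y2))"
proof -
  obtain c where "section_grid S c" using section_grid_exists[OF assms(1,2)] assms(3) by force
  then interpret section_grid S c .
  show ?thesis using parallel_imp_type_3C crown_unless_parallel assms(3) by blast
qed

lemma nice_section_top_not_type_3C:
  assumes "finite S" "is_section S" "is_nice S" "0 < height S"
  shows "\<not> type_3C (level S (height S - 1) \<union> level S (height S))"
proof -
  obtain c where "section_grid S c" using section_grid_exists[OF assms(1,2,4)] by blast
  then interpret section_grid S c .
  have "Suc (height S - 1) = height S" using assms(4) by simp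
  then show ?thesis using type_3C_imp_parallel[of "height S - 1"] top_not_parallel assms(3,4) by auto
qed

section \<open>Towers of sections\<close>

locale ordinal_sum_of_sections =
  fixes Qs :: "'a::order set list" and R :: "'a set"
  assumes R_eq: "R = \<Union>(set Qs)"
    and sections: "\<And>i. i < length Qs \<Longrightarrow> is_section (Qs ! i)"
    and ordered: "\<And>i j. i < j \<Longrightarrow> j < length Qs \<Longrightarrow> set_less (Qs ! i) (Qs ! j)"
    and finite_R: "finite R"
begin

text \<open>The level of \<open>R\<close> at which the block \<open>Qs ! i\<close> starts.\<close>
definition offset :: "nat \<Rightarrow> nat" where
  "offset i = (\<Sum>j<i. height (Qs ! j) + 1)"

lemma block_subset: "i < length Qs \<Longrightarrow> Qs ! i \<subseteq> R"
  using R_eq by auto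

lemma finite_block: "i < length Qs \<Longrightarrow> finite (Qs ! i)"
  using block_subset finite_R finite_subset by blast

lemma block_nonempty:
  assumes "i < length Qs" shows "Qs ! i \<noteq> {}"
proof
  assume "Qs ! i = {}"
  then show False using sections[OF assms] height_empty unfolding is_section_def by simp
qed

lemma block_unique:
  "i < length Qs \<Longrightarrow> j < length Qs \<Longrightarrow> x \<in> Qs ! i \<Longrightarrow> x \<in> Qs ! j \<Longrightarrow> i = j"
  using ordered unfolding set_less_def by (metis less_irrefl linorder_neq_iff)

lemma ex_block: "x \<in> R \<Longrightarrow> \<exists>i<length Qs. x \<in> Qs ! i"
  using R_eq by (auto simp: in_set_conv_nth)

lemma offset_gap: "i < j \<Longrightarrow> offset i + height (Qs ! i) < offset j"
proof -
  assume "i < j"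
  then have "offset (Suc i) \<le> offset j" unfolding offset_def by (intro sum_mono2) auto
  then show ?thesis unfolding offset_def by simp
qed

lemma level_of_block_le: "i < length Qs \<Longrightarrow> x \<in> Qs ! i \<Longrightarrow> level_of (Qs ! i) x \<le> height (Qs ! i)"
  using level_of_le_height finite_block by blast

definition block_of :: "'a \<Rightarrow> nat" where
  "block_of y = (THE i. i < length Qs \<and> y \<in> Qs ! i)"

lemma block_of_eq: "i < length Qs \<Longrightarrow> y \<in> Qs ! i \<Longrightarrow> block_of y = i"
  unfolding block_of_def using block_unique by blast

definition sum_level :: "'a \<Rightarrow> nat" where
  "sum_level y = offset (block_of y) + level_of (Qs ! block_of y) y"

lemma sum_level_eq: "i < length Qs \<Longrightarrow> y \<in> Qs ! i \<Longrightarrow> sum_level y = offset i + level_of (Qs ! i) y"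
  unfolding sum_level_def by (simp add: block_of_eq)

lemma sum_level_less:
  assumes "x \<in> R" "y \<in> R" "x < y" shows "sum_level x < sum_level y"
proof -
  obtain i where i: "i < length Qs" "x \<in> Qs ! i" using ex_block assms(1) by blast
  obtain j where j: "j < length Qs" "y \<in> Qs ! j" using ex_block assms(2) by blast
  consider "i = j" | "i < j" | "j < i" by arith
  then show ?thesis
  proof cases
    case 1
    then show ?thesis
      using sum_level_eq[OF i] sum_level_eq[OF j] level_of_less[OF finite_block[OF i(1)] i(2) _ assms(3)] j
      by simp
  next
    case 2
    then show ?thesis using offset_gap[OF 2] level_of_block_le[OF i] sum_level_eq[OF i] sum_level_eq[OF j] by simp
  next
    case 3
    then have "y < x" using ordered[OF 3 i(1)] i j unfolding set_less_def by blast
    then show ?thesis using assms(3) by simp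
  qed
qed

lemma sum_level_step_down:
  assumes x: "x \<in> R" and j: "sum_level x = Suc j"
  shows "\<exists>y\<in>R. y < x \<and> sum_level y = j"
proof -
  obtain i where i: "i < length Qs" "x \<in> Qs ! i" using ex_block x by blast
  have fin: "finite (Qs ! i)" using finite_block i(1) .
  show ?thesis
  proof (cases "level_of (Qs ! i) x")
    case (Suc t)
    then have "x \<in> level (Qs ! i) (Suc t)" using level_of_mem[OF fin i(2)] by simp
    then obtain y where y: "y \<in> level (Qs ! i) t" "y < x" using ex_less_in_prev_level[OF fin] by blast
    have "y \<in> Qs ! i" using y(1) level_subset by blast
    moreover have "sum_level y = j"
      using sum_level_eq[OF i(1) \<open>y \<in> Qs ! i\<close>] sum_level_eq[OF i] level_of_eq[OF y(1)] Suc j by simp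
    ultimately show ?thesis using y(2) block_subset[OF i(1)] by blast
  next
    case 0
    then have "offset i = Suc j" using sum_level_eq[OF i] j by simp
    then obtain i' where i': "i = Suc i'" unfolding offset_def by (cases i) auto
    have i'_len: "i' < length Qs" using i' i(1) by simp
    have fin': "finite (Qs ! i')" using finite_block i'_len .
    have "level (Qs ! i') (height (Qs ! i')) \<noteq> {}"
      using level_nonempty_iff[OF fin' block_nonempty[OF i'_len]] by simp
    then obtain y where y: "y \<in> level (Qs ! i') (height (Qs ! i'))" by blast
    have yQ: "y \<in> Qs ! i'" using y level_subset by blast
    have "y < x" using ordered[of i' i] i' i yQ unfolding set_less_def by blast
    moreover have "sum_level y = j"
      using sum_level_eq[OF i'_len yQ] level_of_eq[OF y] \<open>offset i = Suc j\<close> unfolding offset_def i' by simp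
    ultimately show ?thesis using yQ block_subset[OF i'_len] by blast
  qed
qed

lemma level_of_sum:
  assumes "i < length Qs" "x \<in> Qs ! i"
  shows "level_of R x = offset i + level_of (Qs ! i) x"
proof -
  have "x \<in> R" using assms block_subset by blast
  have "level_of R x = sum_level x"
  proof (rule level_of_unique[OF finite_R])
    show "\<And>x y. x \<in> R \<Longrightarrow> y \<in> R \<Longrightarrow> x < y \<Longrightarrow> sum_level x < sum_level y"
      by (rule sum_level_less)
    show "\<And>x j. x \<in> R \<Longrightarrow> sum_level x = Suc j \<Longrightarrow> \<exists>y\<in>R. y < x \<and> sum_level y = j"
      by (rule sum_level_step_down)
  qed fact
  then show ?thesis using sum_level_eq[OF assms] by simp
qed

lemma level_offset:
  assumes i: "i < length Qs" and n: "n \<le> height (Qs ! i)"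
  shows "level R (offset i + n) = level (Qs ! i) n"
proof (intro set_eqI iffI)
  fix y assume "y \<in> level (Qs ! i) n"
  then have "y \<in> Qs ! i" "level_of (Qs ! i) y = n"
    using mem_level_iff[OF finite_block[OF i]] by auto
  then show "y \<in> level R (offset i + n)"
    using level_of_sum[OF i] mem_level_iff[OF finite_R] block_subset[OF i] by auto
next
  fix y assume "y \<in> level R (offset i + n)"
  then have y: "y \<in> R" "level_of R y = offset i + n" using mem_level_iff[OF finite_R] by auto
  obtain j where j: "j < length Qs" "y \<in> Qs ! j" using ex_block y(1) by blast
  have eq: "offset j + level_of (Qs ! j) y = offset i + n"
    using y(2) level_of_sum[OF j] by simp
  have "j = i"
  proof (rule ccontr)
    assume "j \<noteq> i"
    then consider "i < j" | "j < i" by arith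
    then show False
      using offset_gap[of i j] offset_gap[of j i] level_of_block_le[OF j] n eq by cases auto
  qed
  then show "y \<in> level (Qs ! i) n"
    using eq j mem_level_iff[OF finite_block[OF i]] by auto
qed

lemma level_eq_block_level:
  assumes "x \<in> level R l"
  obtains i m where "i < length Qs" "m \<le> height (Qs ! i)" "l = offset i + m"
    "level R l = level (Qs ! i) m"
proof -
  have "x \<in> R" "level_of R x = l" using assms mem_level_iff[OF finite_R] by auto
  moreover obtain i where i: "i < length Qs" "x \<in> Qs ! i" using ex_block \<open>x \<in> R\<close> by blast
  ultimately show thesis
    using that[OF i(1) level_of_block_le[OF i]] level_of_sum[OF i] level_offset[OF i(1) level_of_block_le[OF i]]
    by simp
qed

lemma level_has_two_elements:
  assumes "level R j \<noteq> {}" shows "\<exists>a\<in>level R j. \<exists>b\<in>level R j. a \<noteq> b"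
proof -
  obtain x where "x \<in> level R j" using assms by blast
  then obtain i m where i: "i < length Qs" and m: "m \<le> height (Qs ! i)"
    and eq: "level R j = level (Qs ! i) m" by (rule level_eq_block_level)
  have fin: "finite (Qs ! i)" using finite_block[OF i] .
  have "2 \<le> card (level (Qs ! i) m)"
  proof (cases "height (Qs ! i) = 0")
    case True
    then have "Qs ! i \<subseteq> level (Qs ! i) 0"
      using level_of_block_le[OF i] level_of_mem[OF fin] by fastforce
    then have "level (Qs ! i) m = Qs ! i" using m True level_subset by auto
    moreover have "card (Qs ! i) = 2"
      using sections[OF i] True unfolding is_section_def by auto
    ultimately show ?thesis by simp
  next
    case False
    then show ?thesis using section_card_level[OF fin sections[OF i]] m by simp
  qed
  then show ?thesis using card_le_Suc0_iff_eq[of "level (Qs ! i) m"] fin level_subset eq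
    by (metis finite_subset not_less_eq_eq numeral_2_eq_2)
qed

lemma jump_level_not_above_prev:
  assumes card: "card (level R l) = 3" and jump: "set_less (level R l) (level R (Suc l))"
  shows "0 < l \<and> (\<forall>a\<in>level R l. \<exists>u\<in>level R (l - 1). \<not> u \<le> a)"
proof -
  obtain x where "x \<in> level R l" using card by fastforce
  then obtain i m where i: "i < length Qs" and m: "m \<le> height (Qs ! i)"
    and l: "l = offset i + m" and eq: "level R l = level (Qs ! i) m" by (rule level_eq_block_level)
  define Q where "Q = Qs ! i"
  have fin: "finite Q" and sec: "is_section Q" using finite_block sections i unfolding Q_def by auto
  have "\<not> card Q \<le> 2"
    using card_mono[OF fin level_subset[of Q m]] card eq unfolding Q_def by simp
  then have h: "0 < height Q"
    and no_complete_step: "\<not> (\<exists>k. set_less (level Q k) (level Q (Suc k)) \<and>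
      card (level Q k) = 3 \<and> card (level Q (Suc k)) = 3)"
    using sec unfolding is_section_def by auto
  have m_top: "m = height Q"
  proof (rule ccontr)
    assume "m \<noteq> height Q"
    then have "Suc m \<le> height Q" using m unfolding Q_def by simp
    then have "level R (Suc l) = level Q (Suc m)"
      using level_offset[OF i] l unfolding Q_def by (metis add_Suc_right)
    then show False
      using no_complete_step jump eq section_card_level[OF fin sec h] \<open>Suc m \<le> height Q\<close> m
      unfolding Q_def by (metis card)
  qed
  have prev: "level R (l - 1) = level Q (m - 1)"
    using level_offset[OF i, of "m - 1"] l m_top h unfolding Q_def by (simp add: Nat.add_diff_assoc)
  have "\<exists>u\<in>level R (l - 1). \<not> u \<le> a" if a: "a \<in> level R l" for a
  proof -
    have "a \<in> level Q (Suc (m - 1))" using a eq m_top h unfolding Q_def by simp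
    then obtain u where u: "u \<in> level Q (m - 1)" "\<not> u < a"
      using section_ex_not_below[OF fin sec] m_top h by (metis diff_less zero_less_one)
    moreover have "u \<noteq> a"
      using level_disjoint[of a Q "m - 1" "Suc (m - 1)"] u(1) \<open>a \<in> level Q (Suc (m - 1))\<close> by auto
    ultimately show ?thesis using prev by (auto simp: le_less)
  qed
  then show ?thesis using l m_top h by simp
qed

end

lemma tower_imp_ordinal_sum_of_sections:
  assumes "finite R" "tower_of_nice_sections R"
  obtains Qs where "ordinal_sum_of_sections Qs R"
proof -
  obtain Qs where "R = \<Union>(set Qs)" "\<forall>i<length Qs. is_section (Qs ! i) \<and> is_nice (Qs ! i)"
    "\<forall>i j. i < j \<and> j < length Qs \<longrightarrow> set_less (Qs ! i) (Qs ! j)"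
    using assms(2) unfolding tower_of_nice_sections_def by blast
  then have "ordinal_sum_of_sections Qs R" using assms(1) by unfold_locales auto
  then show thesis by (rule that)
qed

lemma tower_level_has_two_elements:
  assumes "finite R" "tower_of_nice_sections R" "level R j \<noteq> {}"
  shows "\<exists>a\<in>level R j. \<exists>b\<in>level R j. a \<noteq> b"
  using tower_imp_ordinal_sum_of_sections[OF assms(1,2)]
    ordinal_sum_of_sections.level_has_two_elements assms(3) by blast

lemma tower_jump_level_not_above_prev:
  assumes "finite R" "tower_of_nice_sections R"
    and "card (level R l) = 3" "set_less (level R l) (level R (Suc l))"
  shows "0 < l \<and> (\<forall>a\<in>level R l. \<exists>u\<in>level R (l - 1). \<not> u \<le> a)"
  using tower_imp_ordinal_sum_of_sections[OF assms(1,2)]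
    ordinal_sum_of_sections.jump_level_not_above_prev assms(3,4) by blast

section \<open>Retracts of posets in the class N2\<close>

locale N2_retraction =
  fixes P R :: "'a::order set" and r :: "'a \<Rightarrow> 'a"
  assumes N2: "in_N2 P" and retraction: "retraction P r R" and tower: "tower_of_nice_sections R"
begin

lemma finite_P: "finite P" and section_P: "is_section P" and nice_P: "is_nice P"
  and height_P: "2 \<le> height P"
  using N2 unfolding in_N2_def by blast+

lemma image_P: "r ` P = R" and retract_into_P: "x \<in> P \<Longrightarrow> r x \<in> P"
  and retract_mono: "x \<in> P \<Longrightarrow> y \<in> P \<Longrightarrow> x \<le> y \<Longrightarrow> r x \<le> r y"
  and retract_idem: "x \<in> P \<Longrightarrow> r (r x) = r x"
  using retraction unfolding retraction_def by simp_all

lemma R_subset_P: "R \<subseteq> P"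
  using image_P retract_into_P by blast

lemma finite_R: "finite R"
  using finite_subset[OF R_subset_P finite_P] .

lemma retract_in_R: "x \<in> P \<Longrightarrow> r x \<in> R"
  using image_P by blast

lemma retract_fixed: "y \<in> R \<Longrightarrow> r y = y"
  using image_P retract_idem by blast

lemma horizon_2: "k + 2 \<le> l \<Longrightarrow> set_less (level P k) (level P l)"
  using N2 unfolding in_N2_def by blast

lemma less_if_level_gap:
  assumes "x \<in> P" "y \<in> P" "level_of P x + 2 \<le> level_of P y" shows "x < y"
proof -
  have "set_less (level P (level_of P x)) (level P (level_of P y))"
    using horizon_2[OF assms(3)] .
  then show ?thesis
    using level_of_mem[OF finite_P assms(1)] level_of_mem[OF finite_P assms(2)]
    unfolding set_less_def by blast
qed

lemma P_nonempty: "P \<noteq> {}"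
proof
  assume "P = {}"
  then show False using height_P by (simp add: height_empty)
qed

lemma level_P_nonempty: "m \<le> height P \<Longrightarrow> level P m \<noteq> {}"
  using level_nonempty_iff[OF finite_P P_nonempty] by blast

lemma level_R_nonempty: "m \<le> height R \<Longrightarrow> level R m \<noteq> {}"
proof -
  have "R \<noteq> {}" using retraction P_nonempty unfolding retraction_def by blast
  then show "m \<le> height R \<Longrightarrow> level R m \<noteq> {}" using level_nonempty_iff[OF finite_R] by blast
qed

end

text \<open>The last two assumptions are where the alternatives (a) and (b) of the theorem enter.\<close>

locale N2_retraction_jump = N2_retraction +
  fixes k l :: nat
  assumes jump: "set_less (level R l) (level R (Suc l))"
    and l_lt: "l < height R"
    and k_lt: "k < height P"
    and low_level: "level R l \<subseteq> level P k"
    and image_high: "\<And>x. x \<in> level P (Suc k) \<Longrightarrow> Suc l \<le> level_of R (r x)"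
    and no_upper_bound: "\<And>y. y \<in> level P (Suc k) \<Longrightarrow> \<exists>a\<in>level R l. \<not> a < y"
begin

lemma next_level_high:
  assumes y: "y \<in> level R (Suc l)" shows "Suc (Suc k) \<le> level_of P y"
proof -
  have yP: "y \<in> P" using y level_subset R_subset_P by blast
  obtain a where a: "a \<in> level R l" using level_R_nonempty l_lt by fastforce
  then have "a < y" using jump y unfolding set_less_def by blast
  moreover have "a \<in> level P k" using a low_level by blast
  ultimately have "k < level_of P y"
    using less_imp_level_less level_of_mem[OF finite_P yP] by blast
  moreover have "level_of P y \<noteq> Suc k"
  proof
    assume "level_of P y = Suc k"
    then obtain a' where "a' \<in> level R l" "\<not> a' < y"
      using no_upper_bound level_of_mem[OF finite_P yP] by force
    then show False using jump y unfolding set_less_def by blast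
  qed
  ultimately show ?thesis by simp
qed

lemma retract_eq_if_less:
  assumes x: "x \<in> level P (Suc k)" and y: "y \<in> level R (Suc l)" and "x < y"
  shows "r x = y"
proof -
  have xP: "x \<in> P" and yR: "y \<in> R" using x y level_subset by blast+
  obtain y' where y': "y' \<in> level R (Suc l)" "y' \<le> r x"
    using ex_le_in_level[OF finite_R retract_in_R[OF xP] image_high[OF x]] by blast
  have "r x \<le> y" using retract_mono[OF xP] R_subset_P yR \<open>x < y\<close> retract_fixed[OF yR] by force
  then have "y' = y" using level_antichain_le[OF y'(1) y] y'(2) by simp
  then show ?thesis using y'(2) \<open>r x \<le> y\<close> by simp
qed

lemma retract_eq_if_far_above:
  assumes z: "z \<in> level R (Suc l)" "Suc (Suc (Suc k)) \<le> level_of P z"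
    and x: "x \<in> level P (Suc k)"
  shows "r x = z"
proof -
  have "x \<in> P" "z \<in> P" using x z(1) level_subset R_subset_P by blast+
  then have "x < z" using less_if_level_gap z(2) level_of_eq[OF x] by simp
  then show ?thesis by (rule retract_eq_if_less[OF x z(1)])
qed

lemma next_level_in_P: "level R (Suc l) \<subseteq> level P (Suc (Suc k))"
proof
  fix y assume y: "y \<in> level R (Suc l)"
  have yP: "y \<in> P" using y level_subset R_subset_P by blast
  show "y \<in> level P (Suc (Suc k))"
  proof (rule ccontr)
    \<comment> \<open>Then \<open>r\<close> is constantly \<open>y\<close> on \<open>P(k+1)\<close>, yet it also hits another element of \<open>R(l+1)\<close>.\<close>
    assume "y \<notin> level P (Suc (Suc k))"
    then have y_high: "Suc (Suc (Suc k)) \<le> level_of P y"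
      using next_level_high[OF y] mem_level_iff[OF finite_P] yP by fastforce
    obtain y2 where y2: "y2 \<in> level R (Suc l)" "y2 \<noteq> y"
      using tower_level_has_two_elements[OF finite_R tower] y by blast
    obtain x where x: "x \<in> level P (Suc k)" "r x = y2"
    proof (cases "y2 \<in> level P (Suc (Suc k))")
      case True
      then obtain x where "x \<in> level P (Suc k)" "x < y2" using ex_less_in_prev_level[OF finite_P] by blast
      then show thesis using that retract_eq_if_less[OF _ y2(1)] by blast
    next
      case False
      then have "Suc (Suc (Suc k)) \<le> level_of P y2"
        using next_level_high[OF y2(1)] mem_level_iff[OF finite_P] y2(1) level_subset R_subset_P
        by (metis le_antisym not_less_eq_eq subsetD)
      moreover obtain x where "x \<in> level P (Suc k)" using level_P_nonempty k_lt by fastforce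
      ultimately show thesis using that retract_eq_if_far_above[OF y2(1)] by blast
    qed
    then show False using retract_eq_if_far_above[OF y y_high x(1)] y2(2) by simp
  qed
qed

lemma next_levels_type_3C: "type_3C (level P (Suc k) \<union> level P (Suc (Suc k)))"
proof -
  obtain a b where ab: "a \<in> level R (Suc l)" "b \<in> level R (Suc l)" "a \<noteq> b"
    using tower_level_has_two_elements[OF finite_R tower] level_R_nonempty l_lt by (meson Suc_leI)
  then have "a \<in> level P (Suc (Suc k))" "b \<in> level P (Suc (Suc k))" using next_level_in_P by blast+
  moreover have "Suc k < height P"
    using level_nonempty_imp_le_height[OF finite_P] \<open>a \<in> level P (Suc (Suc k))\<close> by fastforce
  moreover have "\<not> (\<exists>x\<in>level P (Suc k). x < a \<and> x < b)"
    using retract_eq_if_less ab by metis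
  ultimately show ?thesis using section_type_3C_or_crown[OF finite_P section_P] ab(3) by blast
qed

lemma three_levels_above: "Suc (Suc (Suc k)) \<le> height P"
proof (rule ccontr)
  assume "\<not> ?thesis"
  moreover have "Suc (Suc k) \<le> height P"
    using next_level_in_P level_R_nonempty[of "Suc l"] l_lt level_nonempty_imp_le_height[OF finite_P]
    by (metis Suc_leI subset_empty)
  ultimately have "height P = Suc (Suc k)" by simp
  then show False
    using nice_section_top_not_type_3C[OF finite_P section_P nice_P] next_levels_type_3C by simp
qed

lemma retract_below_level_after_next:
  assumes x: "x \<in> level P (Suc k)" and v: "v \<in> level R (Suc (Suc l))"
  shows "r x \<le> v"
proof -
  have xP: "x \<in> P" and vR: "v \<in> R" using x v level_subset by blast+
  have vP: "v \<in> P" using vR R_subset_P by blast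
  obtain y where y: "y \<in> level R (Suc l)" "y < v" using ex_less_in_prev_level[OF finite_R v] by blast
  then have "y \<in> level P (Suc (Suc k))" using next_level_in_P by blast
  then have "Suc (Suc k) < level_of P v"
    using less_imp_level_less[OF _ level_of_mem[OF finite_P vP] y(2)] by blast
  then have "x < v" using less_if_level_gap[OF xP vP] level_of_eq[OF x] by simp
  then show ?thesis using retract_mono[OF xP vP] retract_fixed[OF vR] by simp
qed

lemma retract_in_next_level:
  assumes x: "x \<in> level P (Suc k)" shows "r x \<in> level R (Suc l)"
proof -
  have wR: "r x \<in> R" using retract_in_R x level_subset by blast
  obtain y where y: "y \<in> level R (Suc l)" "y \<le> r x"
    using ex_le_in_level[OF finite_R wR] image_high[OF x] by blast
  show ?thesis
  proof (cases "r x = y")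
    case False
    \<comment> \<open>Then \<open>r x\<close> would lie below every element of the antichain \<open>R(l+2)\<close> and in it.\<close>
    then have "Suc l < level_of R (r x)"
      using y less_imp_level_less[OF y(1) level_of_mem[OF finite_R wR]] by simp
    then obtain v where v: "v \<in> level R (Suc (Suc l))" "v \<le> r x"
      using ex_le_in_level[OF finite_R wR] by (meson Suc_leI)
    then have "r x = v" using retract_below_level_after_next[OF x] by (simp add: order_antisym)
    obtain a b where "a \<in> level R (Suc (Suc l))" "b \<in> level R (Suc (Suc l))" "a \<noteq> b"
      using tower_level_has_two_elements[OF finite_R tower] v(1) by blast
    then show ?thesis
      using retract_below_level_after_next[OF x] level_antichain_le v(1) \<open>r x = v\<close> by metis
  qed (use y in simp)
qed

lemma image_next_level: "r ` level P (Suc k) = level R (Suc l)"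
proof
  show "level R (Suc l) \<subseteq> r ` level P (Suc k)"
  proof
    fix y assume y: "y \<in> level R (Suc l)"
    then obtain x where "x \<in> level P (Suc k)" "x < y"
      using next_level_in_P ex_less_in_prev_level[OF finite_P] by blast
    then show "y \<in> r ` level P (Suc k)" using retract_eq_if_less[OF _ y] by force
  qed
next
  show "r ` level P (Suc k) \<subseteq> level R (Suc l)" using retract_in_next_level by blast
qed

end

context N2_retraction
begin

lemma prev_level_below_if_level_eq:
  assumes eq: "level R l = level P k" and "0 < l" and u: "u \<in> level R (l - 1)"
  shows "level_of P u < k"
proof (rule ccontr)
  assume "\<not> level_of P u < k"
  moreover have uR: "u \<in> R" using u level_subset by blast
  then have uP: "u \<in> P" using R_subset_P by blast
  ultimately obtain a where a: "a \<in> level R l" "a \<le> u"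
    using ex_le_in_level[OF finite_P uP, of k] eq by auto
  moreover have "a \<noteq> u"
  proof
    assume "a = u"
    then have "l = l - 1" using level_disjoint[OF a(1)] u by blast
    then show False using \<open>0 < l\<close> by simp
  qed
  ultimately have "l < l - 1" using less_imp_level_less[OF a(1) u] by simp
  then show False by simp
qed

lemma image_high_if_level_eq:
  assumes eq: "level R l = level P k" and jump: "set_less (level R l) (level R (Suc l))"
    and k: "k < height P" and x: "x \<in> level P (Suc k)"
  shows "Suc l \<le> level_of R (r x)"
proof -
  have xP: "x \<in> P" using x level_subset by blast
  obtain a where a: "a \<in> level P k" "a < x" using ex_less_in_prev_level[OF finite_P x] by blast
  have aR: "a \<in> level R l" using a(1) eq by simp
  then have "a \<in> R" "a \<in> P" using level_subset R_subset_P by blast+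
  then have a_le: "a \<le> r x" using retract_mono[OF _ xP] a(2) retract_fixed by fastforce
  show ?thesis
  proof (cases "r x = a")
    case False
    then have "l < level_of R (r x)"
      using a_le less_imp_level_less[OF aR level_of_mem[OF finite_R retract_in_R[OF xP]]] by simp
    then show ?thesis by simp
  next
    case True
    \<comment> \<open>\<open>R(l) < R(l+1)\<close> makes \<open>R(l)\<close> the top of a block of \<open>R\<close>, which supplies \<open>u\<close>.\<close>
    have "card (level R l) = 3"
      using section_card_level[OF finite_P section_P] eq k height_P by simp
    then obtain u where "0 < l" and u: "u \<in> level R (l - 1)" "\<not> u \<le> a"
      using tower_jump_level_not_above_prev[OF finite_R tower _ jump] aR by blast
    have uR: "u \<in> R" and uP: "u \<in> P" using u(1) level_subset R_subset_P by blast+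
    have "level_of P u + 2 \<le> level_of P x"
      using prev_level_below_if_level_eq[OF eq \<open>0 < l\<close> u(1)] level_of_eq[OF x] by simp
    then have "u \<le> r x" using retract_mono[OF uP xP] less_if_level_gap[OF uP xP] retract_fixed[OF uR] by simp
    then show ?thesis using u(2) True by simp
  qed
qed

lemma no_upper_bound_if_type_3C:
  assumes t: "type_3C (level P k \<union> level P (Suc k))" and low: "level R l \<subseteq> level P k"
    and l: "l \<le> height R" and y: "y \<in> level P (Suc k)"
  shows "\<exists>a\<in>level R l. \<not> a < y"
proof (rule ccontr)
  assume "\<not> ?thesis"
  moreover obtain a b where "a \<in> level R l" "b \<in> level R l" "a \<noteq> b"
    using tower_level_has_two_elements[OF finite_R tower level_R_nonempty[OF l]] by blast
  ultimately show False using type_3C_unique_lower[OF t, of a b y] low y by blast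
qed

end

theorem lemma5p3:
  fixes P R :: "'a::order set" and r :: "'a \<Rightarrow> 'a" and k l :: nat
  assumes "in_N2 P"
    and "retraction P r R"
    and "width R = 3"
    and "tower_of_nice_sections R"
    and "l + 1 \<le> height R"
    and "set_less (level R l) (level R (l + 1))"
    and "k + 1 \<le> height P"
    and "level R l = level P k \<or>
         (level R l \<subset> level P k \<and> type_3C (level P k \<union> level P (k + 1)) \<and>
          r ` level P (k + 1) \<subseteq> levels_between R (l + 1) (height R))"
  shows "k + 3 \<le> height P \<and> type_3C (level P (k + 1) \<union> level P (k + 2)) \<and>
         r ` level P (k + 1) = level R (l + 1) \<and> level R (l + 1) \<subseteq> level P (k + 2)"
proof -
  interpret N2_retraction P R r using assms(1,2,4) by unfold_locales
  have jump: "set_less (level R l) (level R (Suc l))" and l: "l < height R" and k: "k < height P"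
    using assms(5-7) by simp_all
  from assms(8) consider (eq) "level R l = level P k"
    | (cover) "level R l \<subseteq> level P k" "type_3C (level P k \<union> level P (Suc k))"
      "r ` level P (Suc k) \<subseteq> levels_between R (Suc l) (height R)"
    by fastforce
  then have "level R l \<subseteq> level P k \<and> (\<forall>x\<in>level P (Suc k). Suc l \<le> level_of R (r x)) \<and>
    (\<forall>y\<in>level P (Suc k). \<exists>a\<in>level R l. \<not> a < y)"
  proof cases
    case eq
    then show ?thesis
      using image_high_if_level_eq[OF eq jump k] section_ex_not_below[OF finite_P section_P k] by simp
  next
    case cover
    then show ?thesis
      using mem_levels_between_imp_level_of_ge no_upper_bound_if_type_3C[OF cover(2,1)] l by fastforce
  qed
  then interpret N2_retraction_jump P R r k l using jump l k by unfold_locales blast+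
  show ?thesis
    using three_levels_above next_levels_type_3C image_next_level next_level_in_P by simp
qed

end
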